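(* Let $(Y,\preceq,\to)$ be an ordered vector space and $K=\{x\in Y: x\succeq0\}$ its positive cone. If $\prec$ is a strict vector ordering on $Y$, then $K$ is a solid cone with interior $K^\circ=\{x\in Y: x\succ 0\}$. Conversely, if $K$ is a solid cone with interior $K^\circ$, then the relation defined by $x\prec y$ iff $y-x\in K^\circ$ is the unique strict vector ordering on $Y$.
   Context: Vector space with convergence: a real vector space $Y$ with a relation $\to$ between sequences in $Y$ and points of $Y$ (uniqueness of limits not assumed) such that (C1) $x_n\to x$, $y_n\to y$ imply $x_n+y_n\to x+y$; (C2) $x_n\to x$, $\lambda\in\mathbb R$ imply $\lambda x_n\to\lambda x$; (C3) $\lambda_n\to\lambda$ in $\mathbb R$, $x\in Y$ imply $\lambda_n x\to\lambda x$. $A\subseteq Y$ is open if $x_n\to x\in A$ implies $x_n\in A$ for all but finitely many $n$; closed if $x_n\to x$, $x_n\in A$ for all $n$ imply $x\in A$. $A^\circ$ is the union of all open subsets of $A$. A cone is a nonempty closed $K$ with $\lambda K\subseteq K$ ($\lambda\ge 0$), $K+K\subseteq K$, $K\cap(-K)=\{0\}$; solid if $K\ne\{0\}$ and $K^\circ\neq\emptyset$. A vector ordering is a partial order $\preceq$ with (V1) $x\preceq y\Rightarrow x+z\preceq y+z$; (V2) $\lambda\ge0$, $x\preceq y\Rightarrow\lambda x\preceq\lambda y$; (V3) $x_n\to x$, $y_n\to y$, $x_n\preceq y_n$ $\forall n\Rightarrow x\preceq y$; $(Y,\preceq,\to)$ is then an ordered vector space. A strict ordering is a nonempty irreflexive,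 asymmetric, transitive relation. A strict vector ordering on an ordered vector space is a strict ordering $\prec$ such that (S1) $x\prec y\Rightarrow x\preceq y$; (S2) $x\preceq y$, $y\prec z\Rightarrow x\prec z$; (S3) $x\prec y\Rightarrow x+z\prec y+z$; (S4) $\lambda>0$, $x\prec y\Rightarrow\lambda x\prec\lambda y$; (S5) if $x_n\to x$, $y_n\to y$ and $x\prec y$, then $x_n\prec y_n$ for all but finitely many $n$. $x\succ y$ means $y\prec x$. *)

theory Defs
  imports Main "HOL.Real_Vector_Spaces"
begin

text \<open>A real vector space with a sequential convergence relation (limits need not be unique).\<close>
definition conv_space :: "((nat \<Rightarrow> 'a::real_vector) \<Rightarrow> 'a \<Rightarrow> bool) \<Rightarrow> bool" where
  "conv_space cv \<longleftrightarrow>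
     (\<forall>x y a b. cv x a \<longrightarrow> cv y b \<longrightarrow> cv (\<lambda>n. x n + y n) (a + b)) \<and>
     (\<forall>x a (c::real). cv x a \<longrightarrow> cv (\<lambda>n. c *\<^sub>R x n) (c *\<^sub>R a)) \<and>
     (\<forall>(l::nat \<Rightarrow> real) c a. l \<longlonglongrightarrow> c \<longrightarrow> cv (\<lambda>n. l n *\<^sub>R a) (c *\<^sub>R a))"

definition cv_open :: "((nat \<Rightarrow> 'a) \<Rightarrow> 'a \<Rightarrow> bool) \<Rightarrow> 'a set \<Rightarrow> bool" where
  "cv_open cv A \<longleftrightarrow> (\<forall>x a. cv x a \<longrightarrow> a \<in> A \<longrightarrow> (\<forall>\<^sub>F n in sequentially. x n \<in> A))"

definition cv_closed :: "((nat \<Rightarrow> 'a) \<Rightarrow> 'a \<Rightarrow> bool) \<Rightarrow> 'a set \<Rightarrow> bool" where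
  "cv_closed cv A \<longleftrightarrow> (\<forall>x a. cv x a \<longrightarrow> (\<forall>n. x n \<in> A) \<longrightarrow> a \<in> A)"

definition cv_interior :: "((nat \<Rightarrow> 'a) \<Rightarrow> 'a \<Rightarrow> bool) \<Rightarrow> 'a set \<Rightarrow> 'a set" where
  "cv_interior cv A = \<Union>{U. U \<subseteq> A \<and> cv_open cv U}"

definition cv_cone :: "((nat \<Rightarrow> 'a::real_vector) \<Rightarrow> 'a \<Rightarrow> bool) \<Rightarrow> 'a set \<Rightarrow> bool" where
  "cv_cone cv K \<longleftrightarrow> K \<noteq> {} \<and> cv_closed cv K \<and>
     (\<forall>(c::real) x. c \<ge> 0 \<longrightarrow> x \<in> K \<longrightarrow> c *\<^sub>R x \<in> K) \<and>
     (\<forall>x y. x \<in> K \<longrightarrow> y \<in> K \<longrightarrow> x + y \<in> K) \<and>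
     K \<inter> uminus ` K = {0}"

definition cv_solid_cone :: "((nat \<Rightarrow> 'a::real_vector) \<Rightarrow> 'a \<Rightarrow> bool) \<Rightarrow> 'a set \<Rightarrow> bool" where
  "cv_solid_cone cv K \<longleftrightarrow> cv_cone cv K \<and> K \<noteq> {0} \<and> cv_interior cv K \<noteq> {}"

definition vector_ordering ::
  "((nat \<Rightarrow> 'a::real_vector) \<Rightarrow> 'a \<Rightarrow> bool) \<Rightarrow> ('a \<Rightarrow> 'a \<Rightarrow> bool) \<Rightarrow> bool" where
  "vector_ordering cv le \<longleftrightarrow>
     (\<forall>x. le x x) \<and> (\<forall>x y. le x y \<longrightarrow> le y x \<longrightarrow> x = y) \<and>
     (\<forall>x y z. le x y \<longrightarrow> le y z \<longrightarrow> le x z) \<and>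
     (\<forall>x y z. le x y \<longrightarrow> le (x + z) (y + z)) \<and>
     (\<forall>(c::real) x y. c \<ge> 0 \<longrightarrow> le x y \<longrightarrow> le (c *\<^sub>R x) (c *\<^sub>R y)) \<and>
     (\<forall>x y a b. cv x a \<longrightarrow> cv y b \<longrightarrow> (\<forall>n. le (x n) (y n)) \<longrightarrow> le a b)"

definition strict_ordering :: "('a \<Rightarrow> 'a \<Rightarrow> bool) \<Rightarrow> bool" where
  "strict_ordering lt \<longleftrightarrow> (\<exists>x y. lt x y) \<and> (\<forall>x. \<not> lt x x) \<and>
     (\<forall>x y. lt x y \<longrightarrow> \<not> lt y x) \<and> (\<forall>x y z. lt x y \<longrightarrow> lt y z \<longrightarrow> lt x z)"

definition strict_vector_ordering ::
  "((nat \<Rightarrow> 'a::real_vector) \<Rightarrow> 'a \<Rightarrow> bool) \<Rightarrow> ('a \<Rightarrow> 'a \<Rightarrow> bool) \<Rightarrow> ('a \<Rightarrow> 'a \<Rightarrow> bool) \<Rightarrow> bool" where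
  "strict_vector_ordering cv le lt \<longleftrightarrow> strict_ordering lt \<and>
     (\<forall>x y. lt x y \<longrightarrow> le x y) \<and>
     (\<forall>x y z. le x y \<longrightarrow> lt y z \<longrightarrow> lt x z) \<and>
     (\<forall>x y z. lt x y \<longrightarrow> lt (x + z) (y + z)) \<and>
     (\<forall>(c::real) x y. c > 0 \<longrightarrow> lt x y \<longrightarrow> lt (c *\<^sub>R x) (c *\<^sub>R y)) \<and>
     (\<forall>x y a b. cv x a \<longrightarrow> cv y b \<longrightarrow> lt a b \<longrightarrow> (\<forall>\<^sub>F n in sequentially. lt (x n) (y n)))"

end

theory Submission
  imports Defs Complex_Main
begin

text \<open>
  The whole theorem rests on two facts about the strictly positive set \<open>P = {x. 0 \<prec> x}\<close>
  of a strict vector ordering. By (S5) applied to a constant sequence, \<open>P\<close> is open, so it lies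
  in the interior of the positive cone \<open>K\<close>. Conversely, if \<open>x\<close> is interior to \<open>K\<close> and
  \<open>0 \<prec> e\<close>, then \<open>x - t e \<in> K\<close> for some \<open>t > 0\<close> (because \<open>x - e/(n+1) \<rightarrow> x\<close>), hence
  \<open>0 \<prec> t e \<preceq> x\<close>. So \<open>K\<^sup>\<circ> = P\<close>, which also forces uniqueness.
  For the converse direction the interior of a cone is stable under adding elements of
  the cone and under positive scaling, since translates and dilates of open sets are open;
  and it misses \<open>0\<close> because a pointed cone \<open>K \<noteq> {0}\<close> contains no neighbourhood of \<open>0\<close>.
\<close>

lemma conv_space_add: "conv_space cv \<Longrightarrow> cv x a \<Longrightarrow> cv y b \<Longrightarrow> cv (\<lambda>n. x n + y n) (a + b)"
  unfolding conv_space_def by blast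

lemma conv_space_scaleR: "conv_space cv \<Longrightarrow> cv x a \<Longrightarrow> cv (\<lambda>n. c *\<^sub>R x n) (c *\<^sub>R a)"
  unfolding conv_space_def by blast

lemma conv_space_scaleR_left:
  "conv_space cv \<Longrightarrow> l \<longlonglongrightarrow> c \<Longrightarrow> cv (\<lambda>n. l n *\<^sub>R a) (c *\<^sub>R a)"
  unfolding conv_space_def by blast

lemma conv_space_const: "conv_space cv \<Longrightarrow> cv (\<lambda>n. a) a"
  using conv_space_scaleR_left[of cv "\<lambda>n. 1" 1 a] by simp

lemma conv_space_add_const: "conv_space cv \<Longrightarrow> cv x a \<Longrightarrow> cv (\<lambda>n. x n + k) (a + k)"
  using conv_space_add conv_space_const by blast

lemma conv_space_diff: "conv_space cv \<Longrightarrow> cv x a \<Longrightarrow> cv y b \<Longrightarrow> cv (\<lambda>n. y n - x n) (b - a)"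
  using conv_space_add[of cv y b "\<lambda>n. (-1) *\<^sub>R x n" "(-1) *\<^sub>R a"]
    conv_space_scaleR[of cv x a "-1"] by simp

lemma conv_space_diff_inverse_Suc:
  assumes "conv_space cv"
  shows "cv (\<lambda>n. x - inverse (real (Suc n)) *\<^sub>R e) x"
proof -
  have "(\<lambda>n. - inverse (real (Suc n))) \<longlonglongrightarrow> - 0"
    by (intro tendsto_minus LIMSEQ_inverse_real_of_nat)
  from conv_space_scaleR_left[OF assms this, of e]
  have "cv (\<lambda>n. (- inverse (real (Suc n))) *\<^sub>R e) (0 *\<^sub>R e)" by simp
  from conv_space_add[OF assms conv_space_const[OF assms] this, of x] show ?thesis
    by simp
qed

lemma cv_openD: "cv_open cv U \<Longrightarrow> cv x a \<Longrightarrow> a \<in> U \<Longrightarrow> \<forall>\<^sub>F n in sequentially. x n \<in> U"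
  unfolding cv_open_def by blast

lemma cv_interiorD: "x \<in> cv_interior cv A \<Longrightarrow> x \<in> A"
  unfolding cv_interior_def by blast

lemma cv_interior_maximal: "cv_open cv U \<Longrightarrow> U \<subseteq> A \<Longrightarrow> U \<subseteq> cv_interior cv A"
  unfolding cv_interior_def by blast

lemma cv_open_cv_interior: "cv_open cv (cv_interior cv A)"
  unfolding cv_open_def
proof (intro allI impI)
  fix x a
  assume "cv x a" and "a \<in> cv_interior cv A"
  then obtain U where U: "U \<subseteq> A" "cv_open cv U" "a \<in> U"
    unfolding cv_interior_def by blast
  from cv_openD[OF U(2) \<open>cv x a\<close> U(3)]
  show "\<forall>\<^sub>F n in sequentially. x n \<in> cv_interior cv A"
    by (rule eventually_mono) (use U cv_interior_maximal in blast)
qed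

lemma cv_open_translation:
  assumes "conv_space cv" and "cv_open cv U"
  shows "cv_open cv ((\<lambda>u. u + k) ` U)"
  unfolding cv_open_def
proof (intro allI impI)
  fix x a
  assume "cv x a" and "a \<in> (\<lambda>u. u + k) ` U"
  then have "a + - k \<in> U" by auto
  from cv_openD[OF assms(2) conv_space_add_const[OF assms(1) \<open>cv x a\<close>] this]
  show "\<forall>\<^sub>F n in sequentially. x n \<in> (\<lambda>u. u + k) ` U"
    by (rule eventually_mono) (auto intro: image_eqI[of _ _ "_ + - k"])
qed

lemma cv_open_scaling:
  assumes "conv_space cv" and "cv_open cv U" and "t \<noteq> 0"
  shows "cv_open cv ((\<lambda>u. t *\<^sub>R u) ` U)"
  unfolding cv_open_def
proof (intro allI impI)
  fix x a
  assume "cv x a" and "a \<in> (\<lambda>u. t *\<^sub>R u) ` U"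
  then have "inverse t *\<^sub>R a \<in> U" using \<open>t \<noteq> 0\<close> by auto
  from cv_openD[OF assms(2) conv_space_scaleR[OF assms(1) \<open>cv x a\<close>] this]
  show "\<forall>\<^sub>F n in sequentially. x n \<in> (\<lambda>u. t *\<^sub>R u) ` U"
    by (rule eventually_mono) (use \<open>t \<noteq> 0\<close> in \<open>auto intro: image_eqI[of _ _ "inverse t *\<^sub>R _"]\<close>)
qed

lemma cv_interior_diff_scaleR_mem:
  assumes "conv_space cv" and "x \<in> cv_interior cv A"
  obtains t :: real where "t > 0" and "x - t *\<^sub>R e \<in> A"
proof -
  from cv_openD[OF cv_open_cv_interior conv_space_diff_inverse_Suc[OF assms(1)] assms(2)]
  obtain n where "x - inverse (real (Suc n)) *\<^sub>R e \<in> cv_interior cv A"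
    unfolding eventually_sequentially by blast
  then have "x - inverse (real (Suc n)) *\<^sub>R e \<in> A"
    by (rule cv_interiorD)
  moreover have "inverse (real (Suc n)) > 0" by simp
  ultimately show ?thesis
    by (rule that[rotated])
qed

lemma cv_cone_add: "cv_cone cv K \<Longrightarrow> x \<in> K \<Longrightarrow> y \<in> K \<Longrightarrow> x + y \<in> K"
  unfolding cv_cone_def by (elim conjE) blast

lemma cv_cone_scaleR: "cv_cone cv K \<Longrightarrow> 0 \<le> c \<Longrightarrow> x \<in> K \<Longrightarrow> c *\<^sub>R x \<in> K"
  unfolding cv_cone_def by (elim conjE) blast

lemma cv_cone_pointed: "cv_cone cv K \<Longrightarrow> x \<in> K \<Longrightarrow> - x \<in> K \<Longrightarrow> x = 0"
  unfolding cv_cone_def by (elim conjE) (metis IntI image_eqI minus_minus singletonD)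

lemma cone_interior_add:
  assumes "conv_space cv" and "cv_cone cv K" and "x \<in> cv_interior cv K" and "k \<in> K"
  shows "x + k \<in> cv_interior cv K"
proof -
  have "(\<lambda>u. u + k) ` cv_interior cv K \<subseteq> K"
    using cv_cone_add[OF assms(2) cv_interiorD assms(4)] by blast
  then have "(\<lambda>u. u + k) ` cv_interior cv K \<subseteq> cv_interior cv K"
    by (rule cv_interior_maximal[OF cv_open_translation[OF assms(1) cv_open_cv_interior]])
  with assms(3) show ?thesis by blast
qed

lemma cone_interior_scaleR:
  assumes "conv_space cv" and "cv_cone cv K" and "x \<in> cv_interior cv K" and "t > 0"
  shows "t *\<^sub>R x \<in> cv_interior cv K"
proof -
  have "(\<lambda>u. t *\<^sub>R u) ` cv_interior cv K \<subseteq> K"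
    using cv_cone_scaleR[OF assms(2) _ cv_interiorD] assms(4) by force
  then have "(\<lambda>u. t *\<^sub>R u) ` cv_interior cv K \<subseteq> cv_interior cv K"
    using assms(4)
    by (intro cv_interior_maximal[OF cv_open_scaling[OF assms(1) cv_open_cv_interior]]) auto
  with assms(3) show ?thesis by blast
qed

lemma zero_notin_cone_interior:
  assumes "conv_space cv" and "cv_cone cv K" and "K \<noteq> {0}"
  shows "0 \<notin> cv_interior cv K"
proof
  assume "0 \<in> cv_interior cv K"
  obtain e where "e \<in> K" and "e \<noteq> 0"
    using assms(2,3) unfolding cv_cone_def by blast
  obtain t :: real where "t > 0" and "0 - t *\<^sub>R e \<in> K"
    using cv_interior_diff_scaleR_mem[OF assms(1) \<open>0 \<in> cv_interior cv K\<close>] .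
  from cv_cone_scaleR[OF assms(2) _ this(2), of "inverse t"] \<open>t > 0\<close>
  have "- e \<in> K" by simp
  with cv_cone_pointed[OF assms(2) \<open>e \<in> K\<close>] \<open>e \<noteq> 0\<close> show False by blast
qed

lemma
  assumes "vector_ordering cv le"
  shows vector_ordering_refl: "le x x"
    and vector_ordering_antisym: "le x y \<Longrightarrow> le y x \<Longrightarrow> x = y"
    and vector_ordering_trans: "le x y \<Longrightarrow> le y z \<Longrightarrow> le x z"
    and vector_ordering_add_right: "le x y \<Longrightarrow> le (x + z) (y + z)"
    and vector_ordering_scaleR: "0 \<le> c \<Longrightarrow> le x y \<Longrightarrow> le (c *\<^sub>R x) (c *\<^sub>R y)"
    and vector_ordering_limit: "cv s a \<Longrightarrow> cv t b \<Longrightarrow> (\<And>n. le (s n) (t n)) \<Longrightarrow> le a b"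
  using assms unfolding vector_ordering_def by blast+

lemma
  assumes "strict_vector_ordering cv le lt"
  shows strict_vector_ordering_ex: "\<exists>x y. lt x y"
    and strict_vector_ordering_irrefl: "\<not> lt x x"
    and strict_vector_ordering_imp_le: "lt x y \<Longrightarrow> le x y"
    and strict_vector_ordering_le_less_trans: "le x y \<Longrightarrow> lt y z \<Longrightarrow> lt x z"
    and strict_vector_ordering_add_right: "lt x y \<Longrightarrow> lt (x + z) (y + z)"
    and strict_vector_ordering_scaleR: "0 < c \<Longrightarrow> lt x y \<Longrightarrow> lt (c *\<^sub>R x) (c *\<^sub>R y)"
    and strict_vector_ordering_eventually:
      "cv s a \<Longrightarrow> cv t b \<Longrightarrow> lt a b \<Longrightarrow> \<forall>\<^sub>F n in sequentially. lt (s n) (t n)"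
  using assms unfolding strict_vector_ordering_def strict_ordering_def by blast+

lemma vector_ordering_iff_nonneg_diff:
  assumes "vector_ordering cv le"
  shows "le x y \<longleftrightarrow> le 0 (y - x)"
  using vector_ordering_add_right[OF assms, of x y "- x"]
    vector_ordering_add_right[OF assms, of 0 "y - x" x] by auto

lemma strict_vector_ordering_iff_pos_diff:
  assumes "strict_vector_ordering cv le lt"
  shows "lt x y \<longleftrightarrow> lt 0 (y - x)"
  using strict_vector_ordering_add_right[OF assms, of x y "- x"]
    strict_vector_ordering_add_right[OF assms, of 0 "y - x" x] by auto

lemma strict_vector_ordering_ex_pos:
  assumes "strict_vector_ordering cv le lt"
  obtains e where "lt 0 e"
  using strict_vector_ordering_ex[OF assms] strict_vector_ordering_iff_pos_diff[OF assms] by blast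

lemma strict_vector_ordering_less_le_trans:
  assumes "vector_ordering cv le" and "strict_vector_ordering cv le lt"
    and "lt x y" and "le y z"
  shows "lt x z"
proof -
  from vector_ordering_add_right[OF assms(1,4), of "x - z"]
  have "le (x + y - z) x" by (simp add: algebra_simps)
  from strict_vector_ordering_le_less_trans[OF assms(2) this assms(3)]
  have "lt (x + y - z) y" .
  from strict_vector_ordering_add_right[OF assms(2) this, of "z - y"]
  show ?thesis by simp
qed

lemma cv_cone_nonneg:
  assumes "conv_space cv" and "vector_ordering cv le"
  shows "cv_cone cv {x. le 0 x}"
  unfolding cv_cone_def
proof (intro conjI allI impI)
  show "{x. le 0 x} \<noteq> {}"
    using vector_ordering_refl[OF assms(2)] by blast
  show "cv_closed cv {x. le 0 x}"
    unfolding cv_closed_def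
    using vector_ordering_limit[OF assms(2), OF conv_space_const[OF assms(1)]] by blast
next
  fix c :: real and x
  assume "0 \<le> c" and "x \<in> {x. le 0 x}"
  then show "c *\<^sub>R x \<in> {x. le 0 x}"
    using vector_ordering_scaleR[OF assms(2), of c 0 x] by simp
next
  fix x y
  assume "x \<in> {x. le 0 x}" and "y \<in> {x. le 0 x}"
  then have "le 0 y" and "le y (x + y)"
    using vector_ordering_add_right[OF assms(2), of 0 x y] by simp_all
  then show "x + y \<in> {x. le 0 x}"
    using vector_ordering_trans[OF assms(2)] by blast
next
  show "{x. le 0 x} \<inter> uminus ` {x. le 0 x} = {0}"
  proof (intro equalityI subsetI)
    fix x
    assume "x \<in> {x. le 0 x} \<inter> uminus ` {x. le 0 x}"
    then have "le 0 x" and "le x 0"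
      using vector_ordering_iff_nonneg_diff[OF assms(2), of x 0] by auto
    then show "x \<in> {0}"
      using vector_ordering_antisym[OF assms(2)] by blast
  qed (use vector_ordering_refl[OF assms(2)] in force)
qed

lemma cv_open_pos:
  assumes "conv_space cv" and "strict_vector_ordering cv le lt"
  shows "cv_open cv {x. lt 0 x}"
  unfolding cv_open_def
  using strict_vector_ordering_eventually[OF assms(2), OF conv_space_const[OF assms(1)]] by simp

lemma cv_interior_nonneg_eq_pos:
  assumes "conv_space cv" and "vector_ordering cv le" and "strict_vector_ordering cv le lt"
  shows "cv_interior cv {x. le 0 x} = {x. lt 0 x}"
proof
  show "{x. lt 0 x} \<subseteq> cv_interior cv {x. le 0 x}"
    using strict_vector_ordering_imp_le[OF assms(3)]
    by (intro cv_interior_maximal[OF cv_open_pos[OF assms(1,3)]]) blast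
next
  obtain e where "lt 0 e"
    using strict_vector_ordering_ex_pos[OF assms(3)] .
  show "cv_interior cv {x. le 0 x} \<subseteq> {x. lt 0 x}"
  proof
    fix x
    assume "x \<in> cv_interior cv {x. le 0 x}"
    then obtain t :: real where "t > 0" and "le 0 (x - t *\<^sub>R e)"
      using cv_interior_diff_scaleR_mem[OF assms(1)] by blast
    then have "le (t *\<^sub>R e) x"
      using vector_ordering_iff_nonneg_diff[OF assms(2)] by blast
    moreover have "lt 0 (t *\<^sub>R e)"
      using strict_vector_ordering_scaleR[OF assms(3) \<open>t > 0\<close> \<open>lt 0 e\<close>] by simp
    ultimately show "x \<in> {x. lt 0 x}"
      using strict_vector_ordering_less_le_trans[OF assms(2,3)] by blast
  qed
qed

lemma cv_solid_cone_nonneg: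
  assumes "conv_space cv" and "vector_ordering cv le" and "strict_vector_ordering cv le lt"
  shows "cv_solid_cone cv {x. le 0 x}"
proof -
  obtain e where "lt 0 e"
    using strict_vector_ordering_ex_pos[OF assms(3)] .
  then have "e \<noteq> 0" and "le 0 e"
    using strict_vector_ordering_irrefl[OF assms(3)] strict_vector_ordering_imp_le[OF assms(3)]
    by auto
  with \<open>lt 0 e\<close> show ?thesis
    unfolding cv_solid_cone_def cv_interior_nonneg_eq_pos[OF assms]
    using cv_cone_nonneg[OF assms(1,2)] by blast
qed

lemma
  assumes "cv_solid_cone cv K"
  shows cv_solid_cone_cone: "cv_cone cv K"
    and cv_solid_cone_nontrivial: "K \<noteq> {0}"
    and cv_solid_cone_interior_nonempty: "cv_interior cv K \<noteq> {}"
  using assms unfolding cv_solid_cone_def by simp_all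

lemma strict_ordering_cone_interior:
  assumes "conv_space cv" and "cv_solid_cone cv K"
  shows "strict_ordering (\<lambda>x y. y - x \<in> cv_interior cv K)"
  unfolding strict_ordering_def
proof (intro conjI allI impI notI)
  note cone = cv_solid_cone_cone[OF assms(2)]
  have zero: "0 \<notin> cv_interior cv K"
    using zero_notin_cone_interior[OF assms(1) cone cv_solid_cone_nontrivial[OF assms(2)]] .
  have add: "x + y \<in> cv_interior cv K"
    if "x \<in> cv_interior cv K" and "y \<in> cv_interior cv K" for x y
    using cone_interior_add[OF assms(1) cone that(1) cv_interiorD[OF that(2)]] .
  obtain e where "e \<in> cv_interior cv K"
    using cv_solid_cone_interior_nonempty[OF assms(2)] by blast
  then show "\<exists>x y. y - x \<in> cv_interior cv K"
    by (metis diff_zero)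
  fix x y z
  show False if "x - x \<in> cv_interior cv K"
    using that zero by simp
  show False if "y - x \<in> cv_interior cv K" and "x - y \<in> cv_interior cv K"
    using add[OF that] zero by simp
  show "z - x \<in> cv_interior cv K"
    if "y - x \<in> cv_interior cv K" and "z - y \<in> cv_interior cv K"
    using add[OF that(2,1)] by simp
qed

lemma strict_vector_ordering_cone_interior:
  assumes "conv_space cv" and "vector_ordering cv le" and "cv_solid_cone cv {x. le 0 x}"
  shows "strict_vector_ordering cv le (\<lambda>x y. y - x \<in> cv_interior cv {x. le 0 x})"
    (is "strict_vector_ordering cv le (\<lambda>x y. y - x \<in> ?I)")
  unfolding strict_vector_ordering_def
proof (intro conjI allI impI)
  note cone = cv_solid_cone_cone[OF assms(3)]
  have le_iff: "le x y \<longleftrightarrow> y - x \<in> {x. le 0 x}" for x y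
    using vector_ordering_iff_nonneg_diff[OF assms(2)] by simp
  show "strict_ordering (\<lambda>x y. y - x \<in> ?I)"
    using strict_ordering_cone_interior[OF assms(1,3)] .
  fix x y z
  show "le x y" if "y - x \<in> ?I"
    using cv_interiorD[OF that] le_iff[of x y] by blast
  show "y + z - (x + z) \<in> ?I" if "y - x \<in> ?I"
    using that by simp
  show "z - x \<in> ?I" if "le x y" and "z - y \<in> ?I"
  proof -
    have "y - x \<in> {x. le 0 x}"
      using that(1) le_iff[of x y] by blast
    from cone_interior_add[OF assms(1) cone that(2) this] show ?thesis by simp
  qed
next
  fix c :: real and x y
  assume "0 < c" and "y - x \<in> ?I"
  from cone_interior_scaleR[OF assms(1) cv_solid_cone_cone[OF assms(3)] this(2,1)]
  show "c *\<^sub>R y - c *\<^sub>R x \<in> ?I"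
    by (simp add: scaleR_diff_right)
next
  fix s t a b
  assume "cv s a" and "cv t b" and "b - a \<in> ?I"
  from cv_openD[OF cv_open_cv_interior conv_space_diff[OF assms(1) this(1,2)] this(3)]
  show "\<forall>\<^sub>F n in sequentially. t n - s n \<in> ?I" .
qed

lemma strict_vector_ordering_unique:
  assumes "conv_space cv" and "vector_ordering cv le" and "strict_vector_ordering cv le lt"
  shows "lt = (\<lambda>x y. y - x \<in> cv_interior cv {x. le 0 x})"
  using strict_vector_ordering_iff_pos_diff[OF assms(3)] cv_interior_nonneg_eq_pos[OF assms]
  by auto

theorem theorem5p2:
  fixes cv :: "(nat \<Rightarrow> 'a::real_vector) \<Rightarrow> 'a \<Rightarrow> bool"
    and le :: "'a \<Rightarrow> 'a \<Rightarrow> bool"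
  assumes "conv_space cv"
    and "vector_ordering cv le"
  defines "K \<equiv> {x. le 0 x}"
  shows "(\<forall>lt. strict_vector_ordering cv le lt \<longrightarrow>
            cv_solid_cone cv K \<and> cv_interior cv K = {x. lt 0 x}) \<and>
         (cv_solid_cone cv K \<longrightarrow>
            strict_vector_ordering cv le (\<lambda>x y. y - x \<in> cv_interior cv K) \<and>
            (\<forall>lt. strict_vector_ordering cv le lt \<longrightarrow> lt = (\<lambda>x y. y - x \<in> cv_interior cv K)))"
  unfolding K_def
  using cv_solid_cone_nonneg[OF assms(1,2)] cv_interior_nonneg_eq_pos[OF assms(1,2)]
    strict_vector_ordering_cone_interior[OF assms(1,2)]
    strict_vector_ordering_unique[OF assms(1,2)]
  by blast

end
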